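(* On the free algebra $\mathbb{C}\langle x,y\rangle$ each of the following pairs consists of two compatible Poisson brackets (each is a Poisson structure and their Schouten bracket vanishes): (1) $[xx^*,x^*]+[yy^*,x^*]$ and $[yy^*,xy^*]-[y^*,x^2x^*+xyy^*]$; (2) $[xx^*,x^*]+[yx^*,y^*]$ and $[yy^*,yxx^*+y^2y^*]$; (3) $[xy^*,xx^*]$ and $[x^2x^*+xyy^*,yx^*]+[yxx^*+y^2y^*,xx^*+yy^*]$.
   Context: $\mathbb{C}\langle x,y\rangle$ is the path algebra of the quiver $Q$ with one vertex and two loops $x,y$; the double quiver $\bar Q$ has loops $x,y,x^*,y^*$, and $\mathbb{C}\bar Q=\mathbb{C}\langle x,y,x^*,y^*\rangle$, graded by the number $r$ of starred letters in a monomial. $\mathcal{V}Q$ is the quotient of $\mathbb{C}\bar Q$ by the span of $PR-(-1)^{pr}RP$ for $P,R$ homogeneous of degrees $p,r$. For $w\in\{x,y,x^*,y^*\}$, $D_w(x_1\cdots x_n)=\sum_{i:x_i=w}(-1)^{\lambda_i\mu_i}x_{i+1}\cdots x_nx_1\cdots x_{i-1}$, $\lambda_i$ (resp. $\mu_i$) the number of starred letters among $x_{i+1},\dots,x_n$ (resp. $x_1,\dots,x_i$). For $\gamma\in\mathcal{V}^rQ,\delta\in\mathcal{V}^sQ$: $[\gamma,\delta]_{\mathcal V}=\sum_{a\in\{x,y\}}\big(D_{a^*}(\gamma)D_a(\delta)-(-1)^{(r-1)(s-1)}D_{a^*}(\delta)D_a(\gamma)\big)$ modulo the relations. A Poisson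 bracket (structure) is $\Pi\in\mathcal{V}^2Q$ with $[\Pi,\Pi]_{\mathcal V}=0$; $\Pi_1,\Pi_2$ are compatible if $[\Pi_i,\Pi_j]_{\mathcal V}=0$ for $i,j=1,2$. Here $[u,v]=uv-vu$ in $\mathcal{V}Q$. *)

theory Defs
  imports Complex_Main
begin

text \<open>Letters of the double quiver: loops x, y, x*, y*.  Xs = x*, Ys = y*.\<close>
datatype letter = X | Y | Xs | Ys

fun starred :: "letter \<Rightarrow> bool" where
  "starred X = False" | "starred Y = False" | "starred Xs = True" | "starred Ys = True"

definition nstar :: "letter list \<Rightarrow> nat" where
  "nstar w = length (filter starred w)"

text \<open>Elements of the path algebra C<x,y,x*,y*> as coefficient functions on words
  (elements of the algebra are those with finite support).\<close>
type_synonym cpoly = "letter list \<Rightarrow> complex"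

definition fin_supp :: "cpoly \<Rightarrow> bool" where
  "fin_supp P \<longleftrightarrow> finite {w. P w \<noteq> 0}"

definition homog :: "nat \<Rightarrow> cpoly \<Rightarrow> bool" where
  "homog p P \<longleftrightarrow> (\<forall>w. P w \<noteq> 0 \<longrightarrow> nstar w = p)"

definition pmono :: "letter list \<Rightarrow> cpoly" where
  "pmono u = (\<lambda>w. if w = u then 1 else 0)"

definition padd :: "cpoly \<Rightarrow> cpoly \<Rightarrow> cpoly" where
  "padd P R = (\<lambda>w. P w + R w)"

definition psub :: "cpoly \<Rightarrow> cpoly \<Rightarrow> cpoly" where
  "psub P R = (\<lambda>w. P w - R w)"

definition pscale :: "complex \<Rightarrow> cpoly \<Rightarrow> cpoly" where
  "pscale c P = (\<lambda>w. c * P w)"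

definition pmul :: "cpoly \<Rightarrow> cpoly \<Rightarrow> cpoly" where
  "pmul P R = (\<lambda>w. \<Sum>i\<in>{0..length w}. P (take i w) * R (drop i w))"

definition pcomm :: "cpoly \<Rightarrow> cpoly \<Rightarrow> cpoly" where
  "pcomm P R = psub (pmul P R) (pmul R P)"

text \<open>The subspace spanned by the graded commutators PR - (-1)^{pr} RP,
  P, R homogeneous of degrees p, r.  V Q is the quotient by it.\<close>
inductive_set relK :: "cpoly set" where
  zero: "(\<lambda>w. 0) \<in> relK"
| gen: "fin_supp P \<Longrightarrow> fin_supp R \<Longrightarrow> homog p P \<Longrightarrow> homog r R \<Longrightarrow>
         psub (pmul P R) (pscale ((-1) ^ (p * r)) (pmul R P)) \<in> relK"
| add: "A \<in> relK \<Longrightarrow> B \<in> relK \<Longrightarrow> padd A B \<in> relK"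
| scale: "A \<in> relK \<Longrightarrow> pscale c A \<in> relK"

text \<open>Cyclic derivative D_a, extended linearly: the monomial
  s @ [a] @ t (x_1..x_{i-1} = s, x_i = a, x_{i+1}..x_n = t) contributes
  (-1)^(lambda*mu) t @ s, with lambda = #stars(t), mu = #stars(s @ [a]).\<close>
definition Dcyc :: "letter \<Rightarrow> cpoly \<Rightarrow> cpoly" where
  "Dcyc a P = (\<lambda>v. \<Sum>k\<in>{0..length v}.
      (-1) ^ (nstar (take k v) * nstar (drop k v @ [a]))
        * P (drop k v @ [a] @ take k v))"

text \<open>The bracket [gamma,delta]_V for gamma of degree r, delta of degree s
  (computed on representatives).\<close>
definition vbr :: "nat \<Rightarrow> nat \<Rightarrow> cpoly \<Rightarrow> cpoly \<Rightarrow> cpoly" where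
  "vbr r s G H = psub
     (padd (pmul (Dcyc Xs G) (Dcyc X H)) (pmul (Dcyc Ys G) (Dcyc Y H)))
     (pscale ((-1) ^ ((r - 1) * (s - 1)))
        (padd (pmul (Dcyc Xs H) (Dcyc X G)) (pmul (Dcyc Ys H) (Dcyc Y G))))"

definition vzero :: "cpoly \<Rightarrow> bool" where
  "vzero P \<longleftrightarrow> P \<in> relK"

definition poisson :: "cpoly \<Rightarrow> bool" where
  "poisson P \<longleftrightarrow> fin_supp P \<and> homog 2 P \<and> vzero (vbr 2 2 P P)"

definition compatible :: "cpoly \<Rightarrow> cpoly \<Rightarrow> bool" where
  "compatible P1 P2 \<longleftrightarrow> poisson P1 \<and> poisson P2 \<and>
     vzero (vbr 2 2 P1 P1) \<and> vzero (vbr 2 2 P1 P2) \<and>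
     vzero (vbr 2 2 P2 P1) \<and> vzero (vbr 2 2 P2 P2)"

end

theory Submission
  imports Defs
begin

text \<open>Every operation involved is (bi)linear, so the brackets can be computed on explicit
  integer combinations of words. In \<open>\<V>Q\<close> a word equals, up to the Koszul sign, each of
  its cyclic rotations: this is the graded commutator of its two pieces. Hence an element
  vanishes in \<open>\<V>Q\<close> as soon as rotating every word to a canonical representative and
  collecting coefficients leaves nothing; for the twelve brackets of the theorem this is
  checked by evaluation.\<close>

type_synonym terms = "(int \<times> letter list) list"

definition poly_of :: "terms \<Rightarrow> cpoly" where
  "poly_of A = (\<lambda>w. \<Sum>(c, u)\<leftarrow>A. if u = w then of_int c else 0)"

lemma poly_of_Nil [simp]: "poly_of [] = (\<lambda>_. 0)"
  by (simp add: poly_of_def)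

lemma poly_of_Cons: "poly_of ((c, u) # A) = padd (pscale (of_int c) (pmono u)) (poly_of A)"
  by (simp add: poly_of_def padd_def pscale_def pmono_def fun_eq_iff)

lemma poly_of_append: "poly_of (A @ B) = padd (poly_of A) (poly_of B)"
  by (simp add: poly_of_def padd_def fun_eq_iff)

lemma pmono_eq_poly_of: "pmono u = poly_of [(1, u)]"
  by (simp add: poly_of_Cons padd_def pscale_def)

lemma pscale_poly_of: "pscale (of_int c) (poly_of A) = poly_of [(c * d, u). (d, u) \<leftarrow> A]"
  by (induction A) (auto simp: poly_of_Cons pscale_def padd_def fun_eq_iff algebra_simps)

lemma psub_poly_of: "psub (poly_of A) (poly_of B) = poly_of (A @ [(- c, u). (c, u) \<leftarrow> B])"
  using pscale_poly_of[of "-1" B]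
  by (simp add: poly_of_append psub_def padd_def pscale_def fun_eq_iff)

fun letter_rank :: "letter \<Rightarrow> nat" where
  "letter_rank X = 0" | "letter_rank Xs = 1" | "letter_rank Y = 2" | "letter_rank Ys = 3"

fun word_less :: "letter list \<Rightarrow> letter list \<Rightarrow> bool" where
  "word_less [] v = (v \<noteq> [])"
| "word_less (a # u) [] = False"
| "word_less (a # u) (b # v) = (letter_rank a < letter_rank b \<or> a = b \<and> word_less u v)"

fun merge_terms :: "terms \<Rightarrow> terms \<Rightarrow> terms" where
  "merge_terms [] B = B"
| "merge_terms A [] = A"
| "merge_terms ((c, u) # A) ((d, v) # B) =
     (if word_less u v then (c, u) # merge_terms A ((d, v) # B)
      else if word_less v u then (d, v) # merge_terms ((c, u) # A) B
      else if u = v then (c + d, u) # merge_terms A B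
      else (c, u) # (d, v) # merge_terms A B)"
  \<comment> \<open>the last branch is unreachable: \<open>word_less\<close> is a strict total order\<close>

lemma poly_of_merge_terms: "poly_of (merge_terms A B) = poly_of (A @ B)"
  by (induction A B rule: merge_terms.induct) (auto simp: poly_of_def fun_eq_iff)

fun msort_terms :: "terms \<Rightarrow> terms" where
  "msort_terms [] = []"
| "msort_terms [t] = [t]"
| "msort_terms (s # t # A) =
     (let n = length (s # t # A) div 2 in
      merge_terms (msort_terms (take n (s # t # A))) (msort_terms (drop n (s # t # A))))"

lemma poly_of_msort_terms: "poly_of (msort_terms A) = poly_of A"
proof (induction A rule: msort_terms.induct)
  case (3 s t A)
  then show ?case
    by (simp add: Let_def poly_of_merge_terms poly_of_append del: take_Suc_Cons drop_Suc_Cons)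
      (simp add: poly_of_append[symmetric] del: take_Suc_Cons drop_Suc_Cons)
qed simp_all

definition collect_terms :: "terms \<Rightarrow> terms" where
  "collect_terms A = filter (\<lambda>(c, _). c \<noteq> 0) (msort_terms A)"

lemma poly_of_collect_terms: "poly_of (collect_terms A) = poly_of A"
proof -
  have "poly_of (filter (\<lambda>(c, _). c \<noteq> 0) B) = poly_of B" for B
    by (induction B) (auto simp: poly_of_def fun_eq_iff split: if_splits)
  then show ?thesis
    by (simp add: collect_terms_def poly_of_msort_terms)
qed

lemma pmul_pmono: "pmul (pmono u) (pmono v) = pmono (u @ v)"
proof
  fix w
  have split_iff: "(take i w = u \<and> drop i w = v) \<longleftrightarrow> (i = length u \<and> w = u @ v)"
    if "i \<le> length w" for i
    using that by (auto simp: append_eq_conv_conj)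
  have "pmul (pmono u) (pmono v) w = (\<Sum>i\<in>{0..length w}. if i = length u \<and> w = u @ v then 1 else 0)"
    unfolding pmul_def pmono_def by (intro sum.cong) (auto simp: split_iff)
  then show "pmul (pmono u) (pmono v) w = pmono (u @ v) w"
    by (auto simp: pmono_def)
qed

lemma pmul_padd_left: "pmul (padd P Q) R = padd (pmul P R) (pmul Q R)"
  by (simp add: pmul_def padd_def fun_eq_iff ring_distribs sum.distrib)

lemma pmul_padd_right: "pmul R (padd P Q) = padd (pmul R P) (pmul R Q)"
  by (simp add: pmul_def padd_def fun_eq_iff ring_distribs sum.distrib)

lemma pmul_pscale_left: "pmul (pscale c P) R = pscale c (pmul P R)"
  by (simp add: pmul_def pscale_def fun_eq_iff sum_distrib_left mult.assoc)

lemma pmul_pscale_right: "pmul R (pscale c P) = pscale c (pmul R P)"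
  by (simp add: pmul_def pscale_def fun_eq_iff sum_distrib_left mult.left_commute)

lemma pmul_zero_left: "pmul (\<lambda>_. 0) R = (\<lambda>_. 0)"
  by (simp add: pmul_def fun_eq_iff)

lemma pmul_zero_right: "pmul R (\<lambda>_. 0) = (\<lambda>_. 0)"
  by (simp add: pmul_def fun_eq_iff)

definition terms_mul :: "terms \<Rightarrow> terms \<Rightarrow> terms" where
  "terms_mul A B = [(c * d, u @ v). (c, u) \<leftarrow> A, (d, v) \<leftarrow> B]"

lemma pmul_pmono_poly_of: "pmul (pmono u) (poly_of B) = poly_of [(d, u @ v). (d, v) \<leftarrow> B]"
  by (induction B) (auto simp: poly_of_Cons pmul_padd_right pmul_pscale_right pmul_pmono pmul_zero_right)

lemma pmul_poly_of: "pmul (poly_of A) (poly_of B) = poly_of (terms_mul A B)"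
proof (induction A)
  case (Cons cu A)
  obtain c u where "cu = (c, u)" by fastforce
  with Cons show ?case
    using pscale_poly_of[of c "[(d, u @ v). (d, v) \<leftarrow> B]"]
    by (simp add: terms_mul_def poly_of_Cons poly_of_append pmul_padd_left pmul_pscale_left
        pmul_pmono_poly_of comp_def split_def)
qed (simp add: terms_mul_def pmul_zero_left)

definition Dcyc_word :: "letter \<Rightarrow> letter list \<Rightarrow> terms" where
  "Dcyc_word a u =
     map (\<lambda>i. ((-1) ^ (nstar (drop (Suc i) u) * nstar (take i u @ [a])), drop (Suc i) u @ take i u))
       (filter (\<lambda>i. u ! i = a) [0..<length u])"

lemma rotation_split:
  assumes "length u = Suc (length v)" "k \<le> length v" "i = length v - k"
  shows "drop k v @ [a] @ take k v = u \<longleftrightarrow>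
    u ! i = a \<and> drop (Suc i) u = take k v \<and> take i u = drop k v"
proof
  assume "drop k v @ [a] @ take k v = u"
  then show "u ! i = a \<and> drop (Suc i) u = take k v \<and> take i u = drop k v"
    using assms(3) by (auto simp: nth_append)
next
  assume parts: "u ! i = a \<and> drop (Suc i) u = take k v \<and> take i u = drop k v"
  have "u = take i u @ [u ! i] @ drop (Suc i) u"
    using assms by (simp add: id_take_nth_drop)
  with parts show "drop k v @ [a] @ take k v = u" by simp
qed

lemma sum_list_filter_upt: "(\<Sum>i\<leftarrow>filter P [0..<n]. f i) = (\<Sum>i<n. if P i then f i else 0)"
proof -
  have "(\<Sum>i\<leftarrow>filter P [0..<n]. f i) = (\<Sum>i\<in>{i \<in> {..<n}. P i}. f i)"
    by (simp add: sum_list_distinct_conv_sum_set lessThan_atLeast0 set_filter)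
  then show ?thesis using sum.inter_filter[of "{..<n}" f P] by simp
qed

lemma Dcyc_pmono: "Dcyc a (pmono u) = poly_of (Dcyc_word a u)"
proof
  fix v
  define sgn :: "nat \<Rightarrow> complex" where
    "sgn k = (-1) ^ (nstar (take k v) * nstar (drop k v @ [a]))" for k
  have lhs: "Dcyc a (pmono u) v = (\<Sum>k\<in>{0..length v}. if drop k v @ [a] @ take k v = u then sgn k else 0)"
    unfolding Dcyc_def pmono_def sgn_def by (auto intro!: sum.cong)
  have rhs: "poly_of (Dcyc_word a u) v = (\<Sum>i<length u. if u ! i = a \<and> drop (Suc i) u @ take i u = v
      then (-1) ^ (nstar (drop (Suc i) u) * nstar (take i u @ [a])) else 0)"
    by (simp add: poly_of_def Dcyc_word_def comp_def sum_list_filter_upt) (auto intro!: sum.cong)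
  show "Dcyc a (pmono u) v = poly_of (Dcyc_word a u) v"
  proof (cases "length u = Suc (length v)")
    case True
    have summand: "(if u ! (length v - k) = a \<and> drop (Suc (length v - k)) u @ take (length v - k) u = v
        then (-1) ^ (nstar (drop (Suc (length v - k)) u) * nstar (take (length v - k) u @ [a])) else 0)
      = (if drop k v @ [a] @ take k v = u then sgn k else 0)" if "k \<le> length v" for k
    proof -
      have "drop (Suc (length v - k)) u @ take (length v - k) u = v \<longleftrightarrow>
          drop (Suc (length v - k)) u = take k v \<and> take (length v - k) u = drop k v"
        using True that by (simp add: append_eq_conv_conj)
      then show ?thesis
        using rotation_split[OF True that refl, of a] by (auto simp: sgn_def)
    qed
    show ?thesis
      unfolding lhs rhs
      by (rule sum.reindex_bij_witness[of _ "\<lambda>i. length v - i" "\<lambda>k. length v - k"])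
        (use True summand in auto)
  next
    case False
    have "drop k v @ [a] @ take k v \<noteq> u" for k
      using False by (auto dest: arg_cong[of _ _ length])
    moreover have "drop (Suc i) u @ take i u \<noteq> v" if "i < length u" for i
      using False that by (auto dest: arg_cong[of _ _ length])
    ultimately show ?thesis
      unfolding lhs rhs by simp
  qed
qed

lemma Dcyc_padd: "Dcyc a (padd P Q) = padd (Dcyc a P) (Dcyc a Q)"
  by (simp add: Dcyc_def padd_def fun_eq_iff ring_distribs sum.distrib)

lemma Dcyc_pscale: "Dcyc a (pscale c P) = pscale c (Dcyc a P)"
  by (simp add: Dcyc_def pscale_def fun_eq_iff sum_distrib_left mult.left_commute)

lemma Dcyc_zero: "Dcyc a (\<lambda>_. 0) = (\<lambda>_. 0)"
  by (simp add: Dcyc_def fun_eq_iff)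

definition terms_Dcyc :: "letter \<Rightarrow> terms \<Rightarrow> terms" where
  "terms_Dcyc a A = collect_terms [(c * d, v). (c, u) \<leftarrow> A, (d, v) \<leftarrow> Dcyc_word a u]"

lemma Dcyc_poly_of: "Dcyc a (poly_of A) = poly_of (terms_Dcyc a A)"
  unfolding terms_Dcyc_def poly_of_collect_terms
proof (induction A)
  case (Cons cu A)
  obtain c u where "cu = (c, u)" by fastforce
  with Cons show ?case
    using pscale_poly_of[of c "Dcyc_word a u"]
    by (simp add: poly_of_Cons poly_of_append Dcyc_padd Dcyc_pscale Dcyc_pmono
        comp_def split_def)
qed (simp add: Dcyc_zero)

text \<open>For \<open>r = s = 2\<close> the sign \<open>(-1)^((r-1)(s-1))\<close> is \<open>-1\<close>,
  so the two halves of the bracket add.\<close>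

definition terms_vbr :: "terms \<Rightarrow> terms \<Rightarrow> terms" where
  "terms_vbr A B =
     terms_mul (terms_Dcyc Xs A) (terms_Dcyc X B) @ terms_mul (terms_Dcyc Ys A) (terms_Dcyc Y B) @
     terms_mul (terms_Dcyc Xs B) (terms_Dcyc X A) @ terms_mul (terms_Dcyc Ys B) (terms_Dcyc Y A)"

lemma vbr_poly_of: "vbr 2 2 (poly_of A) (poly_of B) = poly_of (terms_vbr A B)"
  by (simp add: vbr_def terms_vbr_def Dcyc_poly_of pmul_poly_of poly_of_append
      psub_def padd_def pscale_def fun_eq_iff)

lemma fin_supp_poly_of: "fin_supp (poly_of A)"
proof -
  have "{w. poly_of A w \<noteq> 0} \<subseteq> snd ` set A"
    by (induction A) (auto simp: poly_of_Cons padd_def pscale_def pmono_def split: if_splits)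
  then show ?thesis
    unfolding fin_supp_def by (rule finite_subset) simp
qed

lemma homog_poly_of: "\<forall>(c, u) \<in> set A. nstar u = p \<Longrightarrow> homog p (poly_of A)"
  by (induction A) (auto simp: homog_def poly_of_Cons padd_def pscale_def pmono_def split: if_splits)

lemma relK_pmono_rotate:
  "psub (pmono w) (pscale ((-1) ^ (nstar (take k w) * nstar (drop k w))) (pmono (drop k w @ take k w)))
     \<in> relK"
  using relK.gen[of "pmono (take k w)" "pmono (drop k w)" "nstar (take k w)" "nstar (drop k w)"]
  by (simp add: pmono_eq_poly_of fin_supp_poly_of homog_poly_of pmul_poly_of terms_mul_def)

definition min_rotation :: "letter list \<Rightarrow> nat" where
  "min_rotation w =
     fold (\<lambda>k j. if word_less (drop k w @ take k w) (drop j w @ take j w) then k else j) [1..<length w] 0"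

text \<open>Soundness does not depend on the choice of rotation; taking a minimal one makes
  rotations of the same word collide, so that their coefficients cancel.\<close>

definition canon_term :: "int \<times> letter list \<Rightarrow> int \<times> letter list" where
  "canon_term = (\<lambda>(c, w). let k = min_rotation w in
     ((-1) ^ (nstar (take k w) * nstar (drop k w)) * c, drop k w @ take k w))"

lemma relK_canon_term: "psub (poly_of A) (poly_of (map canon_term A)) \<in> relK"
proof (induction A)
  case Nil
  then show ?case by (simp add: psub_def relK.zero)
next
  case (Cons cw A)
  obtain c w where cw: "cw = (c, w)" by fastforce
  define k where "k = min_rotation w"
  have "psub (poly_of (cw # A)) (poly_of (map canon_term (cw # A))) =
      padd (pscale (of_int c) (psub (pmono w)
          (pscale ((-1) ^ (nstar (take k w) * nstar (drop k w))) (pmono (drop k w @ take k w)))))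
        (psub (poly_of A) (poly_of (map canon_term A)))"
    by (simp add: cw k_def canon_term_def Let_def poly_of_Cons psub_def padd_def pscale_def fun_eq_iff
        algebra_simps)
  then show ?case
    using relK.add[OF relK.scale[OF relK_pmono_rotate] Cons] by simp
qed

definition cyclically_zero :: "terms \<Rightarrow> bool" where
  "cyclically_zero A \<longleftrightarrow> collect_terms (map canon_term A) = []"

lemma vzero_poly_of:
  assumes "cyclically_zero A"
  shows "vzero (poly_of A)"
proof -
  have "poly_of (map canon_term A) = (\<lambda>_. 0)"
    using poly_of_collect_terms[of "map canon_term A"] assms by (simp add: cyclically_zero_def)
  then show ?thesis
    using relK_canon_term[of A] by (simp add: vzero_def psub_def)
qed

lemma compatible_poly_of:
  assumes "\<forall>(c, u) \<in> set A. nstar u = 2" "\<forall>(c, u) \<in> set B. nstar u = 2"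
    and "cyclically_zero (terms_vbr A A)" "cyclically_zero (terms_vbr A B)"
    and "cyclically_zero (terms_vbr B A)" "cyclically_zero (terms_vbr B B)"
  shows "compatible (poly_of A) (poly_of B)"
  using assms
  by (simp add: compatible_def poisson_def fin_supp_poly_of homog_poly_of vbr_poly_of vzero_poly_of)

lemma pcomm_poly_of:
  "pcomm (poly_of A) (poly_of B) = poly_of (terms_mul A B @ [(- c, u). (c, u) \<leftarrow> terms_mul B A])"
  by (simp add: pcomm_def pmul_poly_of psub_poly_of)

theorem mainTheorem7:
  shows "compatible
           (padd (pcomm (pmono [X, Xs]) (pmono [Xs])) (pcomm (pmono [Y, Ys]) (pmono [Xs])))
           (psub (pcomm (pmono [Y, Ys]) (pmono [X, Ys]))
                 (pcomm (pmono [Ys]) (padd (pmono [X, X, Xs]) (pmono [X, Y, Ys]))))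
       \<and> compatible
           (padd (pcomm (pmono [X, Xs]) (pmono [Xs])) (pcomm (pmono [Y, Xs]) (pmono [Ys])))
           (pcomm (pmono [Y, Ys]) (padd (pmono [Y, X, Xs]) (pmono [Y, Y, Ys])))
       \<and> compatible
           (pcomm (pmono [X, Ys]) (pmono [X, Xs]))
           (padd (pcomm (padd (pmono [X, X, Xs]) (pmono [X, Y, Ys])) (pmono [Y, Xs]))
                 (pcomm (padd (pmono [Y, X, Xs]) (pmono [Y, Y, Ys]))
                        (padd (pmono [X, Xs]) (pmono [Y, Ys]))))"
  unfolding pmono_eq_poly_of poly_of_append[symmetric] pcomm_poly_of psub_poly_of
  by (intro conjI compatible_poly_of; code_simp)

end
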